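(* Let $\Omega=(a_1,b_1)\times\cdots\times(a_n,b_n)\subset\mathbb{R}^n$ be a bounded box. There is a constant $C_H\in(0,4]$ such that for every admissible mesh size vector $h$ and all $u\in W_0^{1,2}(\overline{\Omega}_h)$, $$\sum_{x\in\Omega_h}\frac{u(x)^2}{\operatorname{dist}(x,\partial\Omega_h)^2}\mathbf{h}\le C_H\sum_{i=1}^n\sum_{x\in\overline{\Omega}_h\setminus\partial_i^+\Omega_h}|D_i^+u(x)|^2\mathbf{h}.$$
   Context: Admissible mesh: $h_i>0$, $a_i=k_ih_i$, $b_i=l_ih_i$, $k_i,l_i\in\mathbb{Z}$, $l_i-k_i>1$; $\mathbb{R}^n_h=\{(h_1z_1,\dots,h_nz_n):z_i\in\mathbb{Z}\}$, $\overline{\Omega}_h=\overline{\Omega}\cap\mathbb{R}^n_h$, $\Omega_h=\Omega\cap\mathbb{R}^n_h$, $\partial\Omega_h=\partial\Omega\cap\mathbb{R}^n_h$, $\partial_i^+\Omega_h=\partial\Omega_h\cap\{x_i=b_i\}$, $\mathbf{h}=h_1\cdots h_n$, $D_i^+u(x)=(u(x+h_ie_i)-u(x))/h_i$. $W_0^{1,2}(\overline{\Omega}_h)$ = functions $u:\overline{\Omega}_h\to\mathbb{R}$ vanishing on $\partial\Omega_h$. $\operatorname{dist}(x,\partial\Omega_h)$ is the Euclidean distance from $x$ to the set $\partial\Omega_h$. *)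

theory Defs
  imports "HOL-Analysis.Analysis"
begin

definition admissible_mesh :: "real^'n \<Rightarrow> real^'n \<Rightarrow> real^'n \<Rightarrow> bool" where
  "admissible_mesh a b h \<longleftrightarrow>
     (\<forall>i. h$i > 0 \<and> (\<exists>k l :: int. a$i = of_int k * h$i \<and> b$i = of_int l * h$i \<and> l - k > 1))"

definition grid :: "real^'n \<Rightarrow> (real^'n) set" where
  "grid h = {x. \<exists>z :: 'n \<Rightarrow> int. \<forall>i. x$i = h$i * of_int (z i)}"

definition grid_closure :: "real^'n \<Rightarrow> real^'n \<Rightarrow> real^'n \<Rightarrow> (real^'n) set" where
  "grid_closure a b h = cbox a b \<inter> grid h"

definition grid_interior :: "real^'n \<Rightarrow> real^'n \<Rightarrow> real^'n \<Rightarrow> (real^'n) set" where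
  "grid_interior a b h = box a b \<inter> grid h"

definition grid_boundary :: "real^'n \<Rightarrow> real^'n \<Rightarrow> real^'n \<Rightarrow> (real^'n) set" where
  "grid_boundary a b h = frontier (box a b) \<inter> grid h"

definition grid_upper_face :: "real^'n \<Rightarrow> real^'n \<Rightarrow> real^'n \<Rightarrow> 'n \<Rightarrow> (real^'n) set" where
  "grid_upper_face a b h i = grid_boundary a b h \<inter> {x. x$i = b$i}"

definition fwd_diff :: "real^'n \<Rightarrow> 'n \<Rightarrow> (real^'n \<Rightarrow> real) \<Rightarrow> real^'n \<Rightarrow> real" where
  "fwd_diff h i u x = (u (x + h$i *\<^sub>R axis i 1) - u x) / h$i"

end

theory Submission
  imports Defs
begin

text \<open>
  One-dimensional discrete Hardy inequality: if \<open>v 0 = 0\<close> then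
  \<open>\<Sum>t=1..M. (v t / t)\<^sup>2 \<le> 4 * (\<Sum>t=1..M. (v t - v (t - 1))\<^sup>2)\<close>.
  Each summand of \<open>(v t / t)\<^sup>2 - 2 * (v t - v (t - 1)) * v t / t\<close> is bounded by
  \<open>v (t - 1)\<^sup>2 / (t - 1) - v t\<^sup>2 / t\<close>, so their sum telescopes to a non-positive number,
  and the cross term is then absorbed by AM-GM.

  On the box, apply this from both ends of every grid line in direction \<open>j\<close>, each point
  using the nearer end: this bounds \<open>\<Sum> u(x)\<^sup>2 / d\<^sub>j(x)\<^sup>2\<close> by \<open>4 \<Sum> |D\<^sub>j\<^sup>+ u|\<^sup>2\<close>, where
  \<open>d\<^sub>j(x)\<close> is the distance from \<open>x\<close> to the nearer face orthogonal to \<open>e\<^sub>j\<close>. Every boundary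
  grid point lies on some face, so \<open>dist(x, \<partial>\<Omega>\<^sub>h) \<ge> min\<^sub>j d\<^sub>j(x)\<close> and therefore
  \<open>dist(x, \<partial>\<Omega>\<^sub>h)\<^sup>-\<^sup>2 \<le> \<Sum>\<^sub>j d\<^sub>j(x)\<^sup>-\<^sup>2\<close>; summing over the directions gives \<open>C\<^sub>H = 4\<close>.
\<close>

lemma hardy_summand_le_telescoping:
  fixes p A B :: real
  assumes "p \<ge> 0" and "p = 0 \<Longrightarrow> B = 0"
  shows "(A / (p + 1))\<^sup>2 - 2 * ((A - B) * (A / (p + 1))) \<le> B\<^sup>2 / p - A\<^sup>2 / (p + 1)"
proof (cases "p = 0")
  case True
  then show ?thesis using assms by (simp add: power2_eq_square)
next
  case False
  define \<alpha> \<beta> where "\<alpha> = A / (p + 1)" and "\<beta> = B / p"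
  have A: "A = (p + 1) * \<alpha>" and B: "B = p * \<beta>"
    using assms False unfolding \<alpha>_def \<beta>_def by simp_all
  have "p + 1 \<noteq> 0" using assms by simp
  then have "A / (p + 1) = \<alpha>" "A\<^sup>2 / (p + 1) = (p + 1) * \<alpha>\<^sup>2"
    and "B\<^sup>2 / p = p * \<beta>\<^sup>2"
    using False unfolding A B by (simp_all add: power2_eq_square)
  then have "B\<^sup>2 / p - A\<^sup>2 / (p + 1) - ((A / (p + 1))\<^sup>2 - 2 * ((A - B) * (A / (p + 1)))) = p * (\<alpha> - \<beta>)\<^sup>2"
    unfolding A B by (simp add: algebra_simps power2_eq_square)
  moreover have "p * (\<alpha> - \<beta>)\<^sup>2 \<ge> 0" using assms by simp
  ultimately show ?thesis by linarith
qed

lemma hardy_partial_sum_bound: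
  fixes v :: "int \<Rightarrow> real"
  assumes "v k = 0"
  shows "(\<Sum>t\<in>{k<..k + int M}. (v t / of_int (t - k))\<^sup>2 - 2 * ((v t - v (t - 1)) * (v t / of_int (t - k))))
           \<le> - ((v (k + int M))\<^sup>2 / real M)"
proof (induction M)
  case 0
  then show ?case by simp
next
  case (Suc M)
  let ?s = "\<lambda>t. (v t / of_int (t - k))\<^sup>2 - 2 * ((v t - v (t - 1)) * (v t / of_int (t - k)))"
  have "{k<..k + int (Suc M)} = insert (k + int M + 1) {k<..k + int M}" by auto
  then have "(\<Sum>t\<in>{k<..k + int (Suc M)}. ?s t) = ?s (k + int M + 1) + (\<Sum>t\<in>{k<..k + int M}. ?s t)"
    by simp
  also have "\<dots> \<le> ((v (k + int M))\<^sup>2 / real M - (v (k + int M + 1))\<^sup>2 / (real M + 1))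
                   - (v (k + int M))\<^sup>2 / real M"
    using hardy_summand_le_telescoping[of "real M" "v (k + int M)" "v (k + int M + 1)"] Suc.IH assms
    by (simp add: add.commute)
  finally show ?case by (simp add: ac_simps)
qed

lemma discrete_hardy_from_left:
  fixes v :: "int \<Rightarrow> real"
  assumes "v k = 0"
  shows "(\<Sum>t\<in>{k<..k + int M}. (v t)\<^sup>2 / (of_int (t - k))\<^sup>2)
           \<le> 4 * (\<Sum>t\<in>{k..<k + int M}. (v (t + 1) - v t)\<^sup>2)"
proof -
  let ?I = "{k<..k + int M}"
  define S1 where "S1 = (\<Sum>t\<in>?I. (v t / of_int (t - k))\<^sup>2)"
  define S2 where "S2 = (\<Sum>t\<in>?I. (v t - v (t - 1)) * (v t / of_int (t - k)))"
  define S3 where "S3 = (\<Sum>t\<in>?I. (v t - v (t - 1))\<^sup>2)"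
  have "S1 - 2 * S2 \<le> - ((v (k + int M))\<^sup>2 / real M)"
    using hardy_partial_sum_bound[of v k M, OF assms]
    unfolding S1_def S2_def sum_distrib_left sum_subtractf .
  moreover have "0 \<le> (v (k + int M))\<^sup>2 / real M" by simp
  ultimately have "S1 \<le> 2 * S2" by linarith
  also have "2 * S2 \<le> 2 * S3 + S1 / 2"
  proof -
    have "2 * (x * y) \<le> 2 * x\<^sup>2 + y\<^sup>2 / 2" for x y :: real
      using zero_le_power2[of "2 * x - y"] by (simp add: power2_eq_square algebra_simps)
    then have "2 * S2 \<le> (\<Sum>t\<in>?I. 2 * (v t - v (t - 1))\<^sup>2 + (v t / of_int (t - k))\<^sup>2 / 2)"
      unfolding S2_def sum_distrib_left by (intro sum_mono)
    then show ?thesis by (simp add: S1_def S3_def sum.distrib sum_distrib_left sum_divide_distrib)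
  qed
  finally have "S1 \<le> 4 * S3" by simp
  moreover have "S3 = (\<Sum>t\<in>{k..<k + int M}. (v (t + 1) - v t)\<^sup>2)"
    unfolding S3_def by (rule sum.reindex_bij_witness[where i="\<lambda>t. t + 1" and j="\<lambda>t. t - 1"]) auto
  ultimately show ?thesis by (simp add: S1_def power_divide)
qed

lemma discrete_hardy_from_right:
  fixes v :: "int \<Rightarrow> real"
  assumes "v l = 0"
  shows "(\<Sum>t\<in>{l - int M..<l}. (v t)\<^sup>2 / (of_int (l - t))\<^sup>2)
           \<le> 4 * (\<Sum>t\<in>{l - int M..<l}. (v (t + 1) - v t)\<^sup>2)"
proof -
  have "(\<Sum>t\<in>{l - int M..<l}. (v t)\<^sup>2 / (of_int (l - t))\<^sup>2)
      = (\<Sum>t\<in>{-l<..-l + int M}. (v (- t))\<^sup>2 / (of_int (t - (- l)))\<^sup>2)"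
    by (rule sum.reindex_bij_witness[where i="\<lambda>t. - t" and j="\<lambda>t. - t"]) auto
  also have "\<dots> \<le> 4 * (\<Sum>t\<in>{-l..<-l + int M}. (v (- (t + 1)) - v (- t))\<^sup>2)"
    using discrete_hardy_from_left[of "\<lambda>t. v (- t)" "- l" M] assms by simp
  also have "(\<Sum>t\<in>{-l..<-l + int M}. (v (- (t + 1)) - v (- t))\<^sup>2)
      = (\<Sum>t\<in>{l - int M..<l}. (v (t + 1) - v t)\<^sup>2)"
    by (rule sum.reindex_bij_witness[where i="\<lambda>t. - t - 1" and j="\<lambda>t. - t - 1"])
      (auto simp: power2_commute)
  finally show ?thesis .
qed

lemma discrete_hardy_interval:
  fixes v :: "int \<Rightarrow> real"
  assumes "v k = 0" and "v l = 0" and "k < l"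
  shows "(\<Sum>t\<in>{k<..<l}. (v t)\<^sup>2 / (of_int (min (t - k) (l - t)))\<^sup>2)
           \<le> 4 * (\<Sum>t\<in>{k..<l}. (v (t + 1) - v t)\<^sup>2)"
proof -
  define m where "m = (l - k) div 2"
  have m: "0 \<le> m" "m < l - k" "2 * m \<le> l - k" "l - k \<le> 2 * m + 1"
    using assms(3) unfolding m_def by auto
  then have left_half: "{k<..k + int (nat m)} = {k<..k + m}" "{k..<k + int (nat m)} = {k..<k + m}"
    and right_half: "{l - int (nat (l - k - m - 1))..<l} = {k + m + 1..<l}"
    by auto
  let ?f = "\<lambda>t. (v t)\<^sup>2 / (of_int (min (t - k) (l - t)))\<^sup>2"
  let ?g = "\<lambda>t. (v (t + 1) - v t)\<^sup>2"
  have "(\<Sum>t\<in>{k<..<l}. ?f t) = (\<Sum>t\<in>{k<..k + m}. ?f t) + (\<Sum>t\<in>{k + m + 1..<l}. ?f t)"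
    using m by (subst sum.union_disjoint[symmetric]) (auto intro!: sum.cong)
  also have "(\<Sum>t\<in>{k<..k + m}. ?f t) = (\<Sum>t\<in>{k<..k + m}. (v t)\<^sup>2 / (of_int (t - k))\<^sup>2)"
    using m by (intro sum.cong) auto
  also have "\<dots> \<le> 4 * (\<Sum>t\<in>{k..<k + m}. ?g t)"
    using discrete_hardy_from_left[of v k "nat m", OF assms(1)] unfolding left_half .
  also have "(\<Sum>t\<in>{k + m + 1..<l}. ?f t) = (\<Sum>t\<in>{k + m + 1..<l}. (v t)\<^sup>2 / (of_int (l - t))\<^sup>2)"
    using m by (intro sum.cong) auto
  also have "\<dots> \<le> 4 * (\<Sum>t\<in>{k + m + 1..<l}. ?g t)"
    using discrete_hardy_from_right[of v l "nat (l - k - m - 1)", OF assms(2)] unfolding right_half .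
  also have "4 * (\<Sum>t\<in>{k..<k + m}. ?g t) + 4 * (\<Sum>t\<in>{k + m + 1..<l}. ?g t)
               \<le> 4 * (\<Sum>t\<in>{k..<l}. ?g t)"
    using m by (subst distrib_left[symmetric], subst sum.union_disjoint[symmetric])
      (auto intro!: mult_left_mono sum_mono2)
  finally show ?thesis by simp
qed

lemma mem_grid_iff: "x \<in> grid h \<longleftrightarrow> (\<forall>i. \<exists>z::int. x$i = h$i * of_int z)"
  unfolding grid_def by (auto intro: choice)

lemma mem_grid_closure_iff:
  "x \<in> grid_closure a b h \<longleftrightarrow> (\<forall>i. a$i \<le> x$i \<and> x$i \<le> b$i) \<and> x \<in> grid h"
  unfolding grid_closure_def by (auto simp: mem_box_cart)

lemma mem_grid_interior_iff:
  "x \<in> grid_interior a b h \<longleftrightarrow> (\<forall>i. a$i < x$i \<and> x$i < b$i) \<and> x \<in> grid h"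
  unfolding grid_interior_def by (auto simp: mem_box_cart)

lemma mem_grid_boundary_iff:
  assumes "\<forall>i. a$i < b$i"
  shows "x \<in> grid_boundary a b h \<longleftrightarrow> x \<in> grid_closure a b h \<and> (\<exists>i. x$i = a$i \<or> x$i = b$i)"
proof -
  have "box a b \<noteq> {}" using assms by (simp add: interval_eq_empty_cart not_le)
  then have "frontier (box a b) = cbox a b - box a b" by (simp add: frontier_box)
  moreover have "x \<in> cbox a b - box a b \<longleftrightarrow> x \<in> cbox a b \<and> (\<exists>i. x$i = a$i \<or> x$i = b$i)"
    by (auto simp: mem_box_cart) (metis order_less_le)+
  ultimately show ?thesis unfolding grid_boundary_def grid_closure_def by auto
qed

lemma infdist_weight_le_sum_faces:
  fixes x a b :: "real^'n" and B :: "(real^'n) set"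
  assumes inside: "\<forall>i. a$i < x$i \<and> x$i < b$i"
    and on_faces: "\<forall>y\<in>B. \<exists>i. y$i = a$i \<or> y$i = b$i"
    and "0 \<le> w"
  shows "w / (infdist x B)\<^sup>2 \<le> (\<Sum>j\<in>UNIV. w / (min (x$j - a$j) (b$j - x$j))\<^sup>2)"
proof -
  define d where "d j = min (x$j - a$j) (b$j - x$j)" for j
  have d_pos: "0 < d j" for j using inside unfolding d_def by auto
  obtain j0 where j0: "\<And>j. d j0 \<le> d j"
    using ex_is_arg_min_if_finite[of UNIV d] by (auto simp: is_arg_min_def not_less)
  have "w / (infdist x B)\<^sup>2 \<le> w / (d j0)\<^sup>2"
  proof (cases "B = {}")
    case True
    then show ?thesis using \<open>0 \<le> w\<close> by (simp add: infdist_def)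
  next
    case False
    have "d j0 \<le> infdist x B" unfolding infdist_notempty[OF False]
    proof (rule cINF_greatest[OF False])
      fix y assume "y \<in> B"
      then obtain i where "y$i = a$i \<or> y$i = b$i" using on_faces by auto
      then have "d i \<le> \<bar>x$i - y$i\<bar>" unfolding d_def by auto
      also have "\<dots> \<le> dist x y"
        using component_le_norm_cart[of "x - y" i] by (simp add: dist_norm)
      finally show "d j0 \<le> dist x y" using j0[of i] by linarith
    qed
    then show ?thesis
      using d_pos[of j0] \<open>0 \<le> w\<close> by (intro divide_left_mono power_mono mult_pos_pos) auto
  qed
  also have "\<dots> \<le> (\<Sum>j\<in>UNIV. w / (d j)\<^sup>2)"
    using \<open>0 \<le> w\<close> by (intro member_le_sum) auto
  finally show ?thesis unfolding d_def .
qed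

definition grid_line :: "real^'n \<Rightarrow> 'n \<Rightarrow> real^'n \<Rightarrow> int \<Rightarrow> real^'n" where
  "grid_line h j y t = (\<chi> i. if i = j then h$i * of_int t else y$i)"

lemma grid_line_nth [simp]: "grid_line h j y t $ i = (if i = j then h$j * of_int t else y$i)"
  unfolding grid_line_def by simp

lemma grid_line_step: "grid_line h j y t + h$j *\<^sub>R axis j 1 = grid_line h j y (t + 1)"
  by (simp add: vec_eq_iff axis_def algebra_simps)

lemma grid_line_grid_line [simp]: "grid_line h j (grid_line h j y s) t = grid_line h j y t"
  by (simp add: vec_eq_iff)

lemma grid_line_self: "x$j = h$j * of_int t \<Longrightarrow> grid_line h j x t = x"
  by (simp add: vec_eq_iff)

lemma inj_on_grid_line:
  fixes a h :: "real^'n"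
  assumes "h$j \<noteq> 0"
  shows "inj_on (\<lambda>(y, t). grid_line h j y t) ({y. y$j = a$j} \<times> UNIV)"
proof (rule inj_onI, clarsimp)
  fix y y' :: "real^'n" and t t' :: int
  assume eq: "grid_line h j y t = grid_line h j y' t'" and "y$j = a$j" "y'$j = a$j"
  from eq have "h$j * of_int t = h$j * of_int t'" by (metis grid_line_nth)
  with assms show "y = y' \<and> t = t'"
    using eq \<open>y$j = a$j\<close> \<open>y'$j = a$j\<close> by (auto simp: vec_eq_iff) (metis grid_line_nth)
qed

locale admissible_box =
  fixes a b h :: "real^'n" and k l :: "'n \<Rightarrow> int"
  assumes mesh_pos: "\<And>i. 0 < h$i"
    and lower_eq: "\<And>i. a$i = of_int (k i) * h$i"
    and upper_eq: "\<And>i. b$i = of_int (l i) * h$i"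
    and index_gap: "\<And>i. 1 < l i - k i"
begin

lemma lower_lt_upper: "a$i < b$i"
  using index_gap[of i] mesh_pos[of i] by (simp add: lower_eq upper_eq)

lemma grid_closure_index:
  assumes "x \<in> grid_closure a b h"
  obtains z where "x$j = h$j * of_int z" and "k j \<le> z" and "z \<le> l j"
proof -
  obtain z :: int where z: "x$j = h$j * of_int z"
    using assms unfolding mem_grid_closure_iff mem_grid_iff by blast
  moreover have "a$j \<le> x$j" "x$j \<le> b$j" using assms unfolding mem_grid_closure_iff by auto
  then have "h$j * of_int (k j) \<le> h$j * of_int z" "h$j * of_int z \<le> h$j * of_int (l j)"
    unfolding z lower_eq upper_eq by (simp_all add: mult.commute)
  then have "k j \<le> z" "z \<le> l j" using mesh_pos[of j] by (simp_all add: mult_le_cancel_left_pos)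
  ultimately show thesis using that by blast
qed

lemma finite_grid_closure: "finite (grid_closure a b h)"
proof (rule finite_subset)
  show "grid_closure a b h \<subseteq> (\<lambda>z. \<chi> i. h$i * of_int (z i)) ` (\<Pi>\<^sub>E i\<in>UNIV. {k i..l i})"
  proof
    fix x assume x: "x \<in> grid_closure a b h"
    have "\<forall>i. \<exists>z. x$i = h$i * of_int z \<and> z \<in> {k i..l i}"
      using grid_closure_index[OF x] by (metis atLeastAtMost_iff)
    then obtain z where "\<And>i. x$i = h$i * of_int (z i) \<and> z i \<in> {k i..l i}" by metis
    then show "x \<in> (\<lambda>z. \<chi> i. h$i * of_int (z i)) ` (\<Pi>\<^sub>E i\<in>UNIV. {k i..l i})"
      by (intro image_eqI[of _ _ z]) (auto simp: vec_eq_iff)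
  qed
qed (intro finite_imageI finite_PiE; simp)

lemma grid_line_in_closure:
  assumes "y \<in> grid_closure a b h" and "k j \<le> t" and "t \<le> l j"
  shows "grid_line h j y t \<in> grid_closure a b h"
  using assms mesh_pos[of j] unfolding mem_grid_closure_iff mem_grid_iff
  by (auto simp: lower_eq upper_eq mult.commute)

lemma sum_grid_slab_by_lines:
  assumes "S \<subseteq> {k j..l j}"
  shows "(\<Sum>x\<in>{x \<in> grid_closure a b h. \<exists>t\<in>S. x$j = h$j * of_int t}. f x)
           = (\<Sum>y\<in>{y \<in> grid_closure a b h. y$j = a$j}. \<Sum>t\<in>S. f (grid_line h j y t))"
proof -
  let ?Y = "{y \<in> grid_closure a b h. y$j = a$j}"
  let ?line = "\<lambda>(y, t). grid_line h j y t"
  have "?line ` (?Y \<times> S) = {x \<in> grid_closure a b h. \<exists>t\<in>S. x$j = h$j * of_int t}"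
  proof (intro equalityI subsetI)
    fix x assume "x \<in> ?line ` (?Y \<times> S)"
    then show "x \<in> {x \<in> grid_closure a b h. \<exists>t\<in>S. x$j = h$j * of_int t}"
      using assms grid_line_in_closure by auto
  next
    fix x assume "x \<in> {x \<in> grid_closure a b h. \<exists>t\<in>S. x$j = h$j * of_int t}"
    then obtain t where x: "x \<in> grid_closure a b h" "t \<in> S" "x$j = h$j * of_int t" by auto
    have "grid_line h j x (k j) \<in> ?Y"
      using grid_line_in_closure[OF x(1)] index_gap[of j] by (simp add: lower_eq mult.commute)
    moreover have "x = ?line (grid_line h j x (k j), t)" using grid_line_self[OF x(3)] by simp
    ultimately show "x \<in> ?line ` (?Y \<times> S)" using x(2) by blast
  qed
  moreover have "inj_on ?line (?Y \<times> S)"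
    using mesh_pos[of j] by (intro inj_on_subset[OF inj_on_grid_line[of h j a]]) auto
  ultimately have "bij_betw ?line (?Y \<times> S) {x \<in> grid_closure a b h. \<exists>t\<in>S. x$j = h$j * of_int t}"
    by (simp add: bij_betw_def)
  then show ?thesis
    by (simp add: sum.reindex_bij_betw[symmetric] sum.cartesian_product case_prod_unfold)
qed

lemma hardy_on_grid_line:
  assumes u0: "\<forall>x\<in>grid_boundary a b h. u x = 0" and y: "y \<in> grid_closure a b h"
  shows "(\<Sum>t\<in>{k j<..<l j}. (u (grid_line h j y t))\<^sup>2
             / (min (grid_line h j y t $ j - a$j) (b$j - grid_line h j y t $ j))\<^sup>2)
           \<le> 4 * (\<Sum>t\<in>{k j..<l j}. (fwd_diff h j u (grid_line h j y t))\<^sup>2)"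
proof -
  define c where "c = h$j"
  define v where "v t = u (grid_line h j y t)" for t
  have c: "0 < c" using mesh_pos unfolding c_def by simp
  have "grid_line h j y t \<in> grid_boundary a b h" if "t = k j \<or> t = l j" for t
    using that grid_line_in_closure[OF y] index_gap[of j] lower_lt_upper
    by (auto simp: mem_grid_boundary_iff lower_eq upper_eq mult.commute)
  then have ends: "v (k j) = 0" "v (l j) = 0" using u0 by (auto simp: v_def)
  have "min (grid_line h j y t $ j - a$j) (b$j - grid_line h j y t $ j)
          = c * of_int (min (t - k j) (l j - t))" for t
  proof -
    have "grid_line h j y t $ j - a$j = c * of_int (t - k j)" "b$j - grid_line h j y t $ j = c * of_int (l j - t)"
      by (simp_all add: c_def lower_eq upper_eq algebra_simps)
    then show ?thesis
      using min_mult_distrib_left[of c "of_int (t - k j)" "of_int (l j - t)"] c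
      by (simp del: of_int_diff add: of_int_min)
  qed
  then have "(\<Sum>t\<in>{k j<..<l j}. (u (grid_line h j y t))\<^sup>2
               / (min (grid_line h j y t $ j - a$j) (b$j - grid_line h j y t $ j))\<^sup>2)
           = (\<Sum>t\<in>{k j<..<l j}. (v t)\<^sup>2 / (of_int (min (t - k j) (l j - t)))\<^sup>2) / c\<^sup>2"
    by (simp add: v_def sum_divide_distrib power_mult_distrib mult.commute)
  also have "\<dots> \<le> 4 * (\<Sum>t\<in>{k j..<l j}. (v (t + 1) - v t)\<^sup>2) / c\<^sup>2"
    using discrete_hardy_interval[OF ends] index_gap[of j] by (simp add: divide_right_mono)
  also have "\<dots> = 4 * (\<Sum>t\<in>{k j..<l j}. (fwd_diff h j u (grid_line h j y t))\<^sup>2)"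
    by (simp add: fwd_diff_def grid_line_step v_def c_def power_divide sum_divide_distrib[symmetric])
  finally show ?thesis .
qed

lemma grid_interior_subset_slab:
  "grid_interior a b h \<subseteq> {x \<in> grid_closure a b h. \<exists>t\<in>{k j<..<l j}. x$j = h$j * of_int t}"
proof
  fix x assume x: "x \<in> grid_interior a b h"
  then have cl: "x \<in> grid_closure a b h"
    by (auto simp: mem_grid_interior_iff mem_grid_closure_iff less_imp_le)
  obtain z where z: "x$j = h$j * of_int z" "k j \<le> z" "z \<le> l j" by (rule grid_closure_index[OF cl])
  have "a$j < x$j" "x$j < b$j" using x by (auto simp: mem_grid_interior_iff)
  moreover have "x$j = of_int z * h$j" using z(1) by (simp add: mult.commute)
  ultimately have "z \<noteq> k j" "z \<noteq> l j" by (auto simp: lower_eq upper_eq)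
  with cl z show "x \<in> {x \<in> grid_closure a b h. \<exists>t\<in>{k j<..<l j}. x$j = h$j * of_int t}" by auto
qed

lemma grid_closure_minus_upper_face:
  "grid_closure a b h - grid_upper_face a b h j
     = {x \<in> grid_closure a b h. \<exists>t\<in>{k j..<l j}. x$j = h$j * of_int t}"
proof -
  have "x \<in> grid_upper_face a b h j \<longleftrightarrow> x$j = b$j" if "x \<in> grid_closure a b h" for x
    using that lower_lt_upper by (auto simp: grid_upper_face_def mem_grid_boundary_iff)
  moreover have "x$j \<noteq> b$j \<longleftrightarrow> (\<exists>t\<in>{k j..<l j}. x$j = h$j * of_int t)"
    if cl: "x \<in> grid_closure a b h" for x
  proof
    obtain z where z: "x$j = h$j * of_int z" "k j \<le> z" "z \<le> l j" by (rule grid_closure_index[OF cl])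
    assume "x$j \<noteq> b$j"
    then have "z \<noteq> l j" using z(1) by (auto simp: upper_eq mult.commute)
    with z show "\<exists>t\<in>{k j..<l j}. x$j = h$j * of_int t" by auto
  next
    assume "\<exists>t\<in>{k j..<l j}. x$j = h$j * of_int t"
    then obtain t where "t < l j" "x$j = h$j * of_int t" by auto
    then have "x$j < h$j * of_int (l j)" using mesh_pos[of j] by simp
    then show "x$j \<noteq> b$j" by (simp add: upper_eq mult.commute)
  qed
  ultimately show ?thesis by blast
qed

lemma hardy_along_direction:
  assumes u0: "\<forall>x\<in>grid_boundary a b h. u x = 0"
  shows "(\<Sum>x\<in>grid_interior a b h. (u x)\<^sup>2 / (min (x$j - a$j) (b$j - x$j))\<^sup>2)
           \<le> 4 * (\<Sum>x\<in>grid_closure a b h - grid_upper_face a b h j. (fwd_diff h j u x)\<^sup>2)"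
proof -
  let ?Y = "{y \<in> grid_closure a b h. y$j = a$j}"
  let ?slab = "\<lambda>S. {x \<in> grid_closure a b h. \<exists>t\<in>S. x$j = h$j * of_int t}"
  let ?f = "\<lambda>x. (u x)\<^sup>2 / (min (x$j - a$j) (b$j - x$j))\<^sup>2"
  have "(\<Sum>x\<in>grid_interior a b h. ?f x) \<le> (\<Sum>x\<in>?slab {k j<..<l j}. ?f x)"
    using finite_grid_closure grid_interior_subset_slab by (intro sum_mono2) auto
  also have "\<dots> = (\<Sum>y\<in>?Y. \<Sum>t\<in>{k j<..<l j}. ?f (grid_line h j y t))"
    by (rule sum_grid_slab_by_lines) auto
  also have "\<dots> \<le> (\<Sum>y\<in>?Y. 4 * (\<Sum>t\<in>{k j..<l j}. (fwd_diff h j u (grid_line h j y t))\<^sup>2))"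
    using hardy_on_grid_line[OF u0] by (intro sum_mono) auto
  also have "\<dots> = 4 * (\<Sum>x\<in>?slab {k j..<l j}. (fwd_diff h j u x)\<^sup>2)"
    by (subst sum_grid_slab_by_lines) (auto simp: sum_distrib_left)
  finally show ?thesis unfolding grid_closure_minus_upper_face .
qed

lemma discrete_hardy_box:
  assumes u0: "\<forall>x\<in>grid_boundary a b h. u x = 0"
  shows "(\<Sum>x\<in>grid_interior a b h. (u x)\<^sup>2 / (infdist x (grid_boundary a b h))\<^sup>2 * prod (\<lambda>i. h$i) UNIV)
           \<le> 4 * (\<Sum>i\<in>UNIV. \<Sum>x\<in>grid_closure a b h - grid_upper_face a b h i.
                      \<bar>fwd_diff h i u x\<bar>\<^sup>2 * prod (\<lambda>i. h$i) UNIV)"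
proof -
  define H where "H = prod (\<lambda>i. h$i) UNIV"
  have "0 < H" unfolding H_def using mesh_pos by (simp add: prod_pos)
  have "(u x)\<^sup>2 / (infdist x (grid_boundary a b h))\<^sup>2
          \<le> (\<Sum>j\<in>UNIV. (u x)\<^sup>2 / (min (x$j - a$j) (b$j - x$j))\<^sup>2)"
    if "x \<in> grid_interior a b h" for x
    using that lower_lt_upper
    by (intro infdist_weight_le_sum_faces) (auto simp: mem_grid_interior_iff mem_grid_boundary_iff)
  then have "(\<Sum>x\<in>grid_interior a b h. (u x)\<^sup>2 / (infdist x (grid_boundary a b h))\<^sup>2 * H)
      \<le> (\<Sum>x\<in>grid_interior a b h. (\<Sum>j\<in>UNIV. (u x)\<^sup>2 / (min (x$j - a$j) (b$j - x$j))\<^sup>2) * H)"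
    using \<open>0 < H\<close> by (intro sum_mono mult_right_mono) auto
  also have "\<dots> = H * (\<Sum>j\<in>UNIV. \<Sum>x\<in>grid_interior a b h. (u x)\<^sup>2 / (min (x$j - a$j) (b$j - x$j))\<^sup>2)"
    by (simp add: sum.swap[of _ _ UNIV] sum_distrib_left sum_distrib_right mult.commute)
  also have "\<dots> \<le> H * (\<Sum>j\<in>UNIV. 4 * (\<Sum>x\<in>grid_closure a b h - grid_upper_face a b h j. (fwd_diff h j u x)\<^sup>2))"
    using \<open>0 < H\<close> hardy_along_direction[OF u0] by (intro mult_left_mono sum_mono) auto
  also have "\<dots> = 4 * (\<Sum>i\<in>UNIV. \<Sum>x\<in>grid_closure a b h - grid_upper_face a b h i.
                      \<bar>fwd_diff h i u x\<bar>\<^sup>2 * H)"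
    by (simp add: sum_distrib_left sum_distrib_right mult.commute mult.left_commute)
  finally show ?thesis unfolding H_def .
qed

end

theorem mainTheorem8:
  fixes a b :: "real^'n"
  assumes "\<forall>i. a$i < b$i"
  shows "\<exists>C. 0 < C \<and> C \<le> 4 \<and>
    (\<forall>h u. admissible_mesh a b h \<longrightarrow>
       (\<forall>x\<in>grid_boundary a b h. u x = 0) \<longrightarrow>
       (\<Sum>x\<in>grid_interior a b h. (u x)^2 / (infdist x (grid_boundary a b h))^2 * prod (\<lambda>i. h$i) UNIV)
       \<le> C * (\<Sum>i\<in>UNIV. \<Sum>x\<in>grid_closure a b h - grid_upper_face a b h i.
                 \<bar>fwd_diff h i u x\<bar>^2 * prod (\<lambda>i. h$i) UNIV))"
proof (intro exI[of _ 4] conjI allI impI)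
  fix h :: "real^'n" and u :: "real^'n \<Rightarrow> real"
  assume "admissible_mesh a b h" and "\<forall>x\<in>grid_boundary a b h. u x = 0"
  moreover from \<open>admissible_mesh a b h\<close> obtain k l :: "'n \<Rightarrow> int"
    where "\<And>i. a$i = of_int (k i) * h$i \<and> b$i = of_int (l i) * h$i \<and> l i - k i > 1"
    unfolding admissible_mesh_def by metis
  ultimately interpret admissible_box a b h k l
    by unfold_locales (auto simp: admissible_mesh_def)
  show "(\<Sum>x\<in>grid_interior a b h. (u x)^2 / (infdist x (grid_boundary a b h))^2 * prod (\<lambda>i. h$i) UNIV)
       \<le> 4 * (\<Sum>i\<in>UNIV. \<Sum>x\<in>grid_closure a b h - grid_upper_face a b h i.
                 \<bar>fwd_diff h i u x\<bar>^2 * prod (\<lambda>i. h$i) UNIV)"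
    by (rule discrete_hardy_box) fact
qed simp_all

end
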